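(* Let $d\ge1$, $K\ge2$, $n\ge1$ be such that no Softmax Code in $\mathrm{OB}(d,K)$ has a rattler and no solution of the Tammes problem in $\mathrm{OB}(d,K)$ has a rattler. Then the following are equivalent: (a) every optimal solution $(\mathbf W^\star,\mathbf H^\star)$ of $\min_{\mathbf W\in\mathrm{OB}(d,K),\mathbf H\in\mathrm{OB}(d,nK)}\mathcal L_{\mathrm{HardMax}}(\mathbf W,\mathbf H)$ satisfies $\mathbf h_{k,i}^\star=\mathbf w_k^\star$ for all $i\in[n]$, $k\in[K]$; (b) $\operatorname{argmax}_{\mathbf W\in\mathrm{OB}(d,K)}\rho_{\text{one-vs-rest}}(\mathbf W)=\operatorname{argmax}_{\mathbf W\in\mathrm{OB}(d,K)}\rho_{\text{one-vs-one}}(\mathbf W)$.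
   Context: $\mathrm{OB}(d,m)$ is the set of real $d\times m$ matrices with unit-norm columns; $\mathbf W$ has columns $\mathbf w_k$, $\mathbf H$ has columns $\mathbf h_{k,i}$. $\mathcal L_{\mathrm{HardMax}}(\mathbf W,\mathbf H)=\max_k\max_i\max_{k'\ne k}\langle\mathbf w_{k'}-\mathbf w_k,\mathbf h_{k,i}\rangle$. $\operatorname{dist}(\mathbf v,\mathcal W)=\inf\{\|\mathbf v-\mathbf w\|_2:\mathbf w\in\operatorname{conv}(\mathcal W)\}$. $\rho_{\text{one-vs-rest}}(\mathbf W)=\min_k\operatorname{dist}(\mathbf w_k,\{\mathbf w_j\}_{j\ne k})$; a Softmax Code is a maximizer of it over $\mathrm{OB}(d,K)$, and a rattler of it is an index $k$ with $\operatorname{dist}(\mathbf w_k,\{\mathbf w_j\}_{j\ne k})\ne\rho_{\text{one-vs-rest}}(\mathbf W)$. $\rho_{\text{one-vs-one}}(\mathbf W)=\min_k\min_{k'\ne k}\|\mathbf w_k-\mathbf w_{k'}\|_2$; the Tammes problem is maximizing $\rho_{\text{one-vs-one}}$ over $\mathrm{OB}(d,K)$, and a rattler of a Tammes solution $\mathbf W$ is an index $k$ with $\min_{k'\ne k}\|\mathbf w_k-\mathbf w_{k'}\|_2\ne\rho_{\text{one-vs-one}}(\mathbf W)$. *)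

theory Defs
  imports "HOL-Analysis.Analysis"
begin

text \<open>Vectors in R^d are elements of real^'d (d = CARD('d) >= 1).
  A matrix in OB(d,K) is represented by its column map W :: nat => real^'d,
  columns indexed by k < K; outside the index range the map is fixed to 0
  (extensional representation, so that sets of matrices compare correctly).
  A matrix H in OB(d,nK) is represented by H :: nat => nat => real^'d with
  column h_{k,i} = H k i for k < K, i < n.\<close>

definition OB :: "nat \<Rightarrow> (nat \<Rightarrow> real^'d) set" where
  "OB K = {W. (\<forall>k<K. norm (W k) = 1) \<and> (\<forall>k. K \<le> k \<longrightarrow> W k = 0)}"

definition OB2 :: "nat \<Rightarrow> nat \<Rightarrow> (nat \<Rightarrow> nat \<Rightarrow> real^'d) set" where
  "OB2 K n = {H. (\<forall>k<K. \<forall>i<n. norm (H k i) = 1) \<and>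
                 (\<forall>k i. \<not> (k < K \<and> i < n) \<longrightarrow> H k i = 0)}"

definition L_HardMax :: "nat \<Rightarrow> nat \<Rightarrow> (nat \<Rightarrow> real^'d) \<Rightarrow> (nat \<Rightarrow> nat \<Rightarrow> real^'d) \<Rightarrow> real" where
  "L_HardMax K n W H =
     Max {inner (W k' - W k) (H k i) | k i k'. k < K \<and> i < n \<and> k' < K \<and> k' \<noteq> k}"

definition dist_conv :: "real^'d \<Rightarrow> (real^'d) set \<Rightarrow> real" where
  "dist_conv v S = Inf ((\<lambda>w. norm (v - w)) ` (convex hull S))"

definition ovr_dist :: "nat \<Rightarrow> (nat \<Rightarrow> real^'d) \<Rightarrow> nat \<Rightarrow> real" where
  "ovr_dist K W k = dist_conv (W k) (W ` ({..<K} - {k}))"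

definition rho_ovr :: "nat \<Rightarrow> (nat \<Rightarrow> real^'d) \<Rightarrow> real" where
  "rho_ovr K W = Min (ovr_dist K W ` {..<K})"

definition ovo_dist :: "nat \<Rightarrow> (nat \<Rightarrow> real^'d) \<Rightarrow> nat \<Rightarrow> real" where
  "ovo_dist K W k = Min ((\<lambda>k'. norm (W k - W k')) ` ({..<K} - {k}))"

definition rho_ovo :: "nat \<Rightarrow> (nat \<Rightarrow> real^'d) \<Rightarrow> real" where
  "rho_ovo K W = Min (ovo_dist K W ` {..<K})"

definition argmax_on :: "'a set \<Rightarrow> ('a \<Rightarrow> real) \<Rightarrow> 'a set" where
  "argmax_on S f = {x \<in> S. \<forall>y\<in>S. f y \<le> f x}"

definition softmax_code :: "nat \<Rightarrow> (nat \<Rightarrow> real^'d) \<Rightarrow> bool" where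
  "softmax_code K W \<longleftrightarrow> W \<in> argmax_on (OB K) (rho_ovr K)"

definition tammes_solution :: "nat \<Rightarrow> (nat \<Rightarrow> real^'d) \<Rightarrow> bool" where
  "tammes_solution K W \<longleftrightarrow> W \<in> argmax_on (OB K) (rho_ovo K)"

definition ovr_rattler :: "nat \<Rightarrow> (nat \<Rightarrow> real^'d) \<Rightarrow> nat \<Rightarrow> bool" where
  "ovr_rattler K W k \<longleftrightarrow> k < K \<and> ovr_dist K W k \<noteq> rho_ovr K W"

definition ovo_rattler :: "nat \<Rightarrow> (nat \<Rightarrow> real^'d) \<Rightarrow> nat \<Rightarrow> bool" where
  "ovo_rattler K W k \<longleftrightarrow> k < K \<and> ovo_dist K W k \<noteq> rho_ovo K W"

end

theory Submission
  imports Defs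
begin

(* For fixed W, the best features give HardMax loss -rho_ovr(W): a feature h_k has inner product
   at most L with every w_j - w_k (j ~= k), hence with p_k - w_k for the point p_k of
   conv{w_j : j ~= k} nearest to w_k, while h_k = (w_k - p_k)/|w_k - p_k| attains this bound. So
   the optimal pairs are the Softmax Codes with optimal features, and collapse h_k = w_k says that
   p_k is a multiple of w_k. Since every w_j (j ~= k) lies in the cap
   <w_j, w_k> <= 1 - |w_k - w_j|^2/2, always rho_ovo^2 <= 2 rho_ovr; collapse at the Softmax
   Codes forces equality there, which makes the two argmax sets coincide. Conversely, at a
   rattler-free Tammes solution the point (1 - rho_ovo^2/2) w_k lies in conv{w_j : j ~= k}:
   otherwise w_k could be rotated strictly away from all its nearest neighbours, giving a Tammes
   solution with a rattler. At an optimal pair this point pins every feature h_k to w_k. *)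

section \<open>Unit vectors and convex hulls\<close>

lemma inner_le_on_convex_hull:
  fixes a :: "'a::real_inner"
  assumes "\<And>g. g \<in> G \<Longrightarrow> inner g a \<le> M" and "x \<in> convex hull G"
  shows "inner x a \<le> M"
proof -
  have "convex hull G \<subseteq> {x. inner a x \<le> M}"
    using assms(1) by (intro hull_minimal convex_halfspace_le) (auto simp: inner_commute)
  then show ?thesis
    using assms(2) by (auto simp: inner_commute)
qed

lemma norm_diff_unit_sq:
  fixes a b :: "'a::real_inner"
  assumes "norm a = 1" "norm b = 1"
  shows "(norm (a - b))\<^sup>2 = 2 - 2 * inner a b"
proof -
  have "inner a a = 1" "inner b b = 1"
    using assms by (simp_all add: power2_norm_eq_inner[symmetric])
  then show ?thesis
    by (simp add: power2_norm_eq_inner inner_diff_left inner_diff_right inner_commute)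
qed

lemma unit_eq_if_inner_ge_one:
  fixes a b :: "'a::real_inner"
  assumes "norm a = 1" "norm b = 1" "1 \<le> inner a b"
  shows "a = b"
proof -
  have "(norm (a - b))\<^sup>2 \<le> 0"
    using norm_diff_unit_sq[OF assms(1,2)] assms(3) by simp
  then show ?thesis
    by simp
qed

lemma convex_hull_image_weights:
  fixes f :: "'i \<Rightarrow> 'a::real_vector"
  assumes "finite I" and "x \<in> convex hull (f ` I)"
  obtains u where "\<forall>i\<in>I. 0 \<le> u i" "sum u I = 1" "x = (\<Sum>i\<in>I. u i *\<^sub>R f i)"
proof -
  define Q where "Q = {(\<Sum>i\<in>I. u i *\<^sub>R f i) | u. (\<forall>i\<in>I. 0 \<le> u i) \<and> sum u I = 1}"
  have "f ` I \<subseteq> Q"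
  proof
    fix y assume "y \<in> f ` I"
    then obtain i where "i \<in> I" "y = f i"
      by blast
    then show "y \<in> Q"
      unfolding Q_def using assms(1)
      by (intro CollectI exI[of _ "\<lambda>j. if j = i then 1 else 0"]) (simp add: if_distrib[of "\<lambda>r. r *\<^sub>R _"] cong: if_cong)
  qed
  moreover have "convex Q"
  proof (rule convexI)
    fix x y and a b :: real
    assume "x \<in> Q" "y \<in> Q" "0 \<le> a" "0 \<le> b" "a + b = 1"
    then obtain u v where u: "\<forall>i\<in>I. 0 \<le> u i" "sum u I = 1" "x = (\<Sum>i\<in>I. u i *\<^sub>R f i)"
      and v: "\<forall>i\<in>I. 0 \<le> v i" "sum v I = 1" "y = (\<Sum>i\<in>I. v i *\<^sub>R f i)"
      unfolding Q_def by blast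
    have "a *\<^sub>R x + b *\<^sub>R y = (\<Sum>i\<in>I. (a * u i + b * v i) *\<^sub>R f i)"
      by (simp add: u(3) v(3) scaleR_sum_right scaleR_add_left sum.distrib)
    moreover have "sum (\<lambda>i. a * u i + b * v i) I = 1"
      using u(2) v(2) \<open>a + b = 1\<close> by (simp add: sum.distrib sum_distrib_left[symmetric])
    ultimately show "a *\<^sub>R x + b *\<^sub>R y \<in> Q"
      unfolding Q_def using u(1) v(1) \<open>0 \<le> a\<close> \<open>0 \<le> b\<close>
      by (auto intro!: exI[of _ "\<lambda>i. a * u i + b * v i"])
  qed
  ultimately have "convex hull (f ` I) \<subseteq> Q"
    by (rule hull_minimal)
  then show ?thesis
    using assms(2) that unfolding Q_def by blast
qed

lemma rotation_strictly_below:
  fixes w e :: "'a::real_inner"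
  assumes w: "norm w = 1" and e: "norm e = 1" "inner w e = 0" and "finite G"
    and below: "\<And>g. g \<in> G \<Longrightarrow> inner g w \<le> c"
    and contact: "\<And>g. g \<in> G \<Longrightarrow> inner g w = c \<Longrightarrow> inner g e < 0"
  obtains w' where "norm w' = 1" "\<And>g. g \<in> G \<Longrightarrow> inner g w' < c"
proof -
  define rot where "rot t = cos t *\<^sub>R w + sin t *\<^sub>R e" for t
  have "\<forall>\<^sub>F t in at_right 0. inner g (rot t) < c" if g: "g \<in> G" for g
  proof (cases "inner g w = c")
    case True
    have "DERIV (\<lambda>t. inner g (rot t)) 0 :> inner g e"
      unfolding rot_def by (auto intro!: derivative_eq_intros simp: inner_add_right)
    then obtain \<delta> where "\<delta> > 0" "\<forall>h>0. h < \<delta> \<longrightarrow> inner g (rot (0 + h)) < inner g (rot 0)"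
      using DERIV_neg_dec_right contact[OF g True] by blast
    then show ?thesis
      using True unfolding eventually_at_right_field by (auto simp: rot_def)
  next
    case False
    then have "inner g (rot 0) < c"
      using below[OF g] by (simp add: rot_def)
    moreover have "((\<lambda>t. inner g (rot t)) \<longlongrightarrow> inner g (rot 0)) (at_right 0)"
      unfolding rot_def by (intro tendsto_intros)
    ultimately show ?thesis
      by (simp add: order_tendstoD(2))
  qed
  then have "\<forall>\<^sub>F t in at_right 0. \<forall>g\<in>G. inner g (rot t) < c"
    using \<open>finite G\<close> by (simp add: eventually_ball_finite)
  then obtain t :: real where t: "\<forall>g\<in>G. inner g (rot t) < c"
    using eventually_happens' trivial_limit_at_right_real by blast
  have "inner w w = 1" "inner e e = 1"
    using w e by (simp_all add: power2_norm_eq_inner[symmetric])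
  then have "inner (rot t) (rot t) = 1"
    using e(2) by (simp add: rot_def inner_add_left inner_add_right inner_commute
        flip: power2_eq_square distrib_left)
  then have "norm (rot t) = 1"
    by (simp add: norm_eq_sqrt_inner)
  then show ?thesis
    using that t by blast
qed

lemma tangent_vector_away_from_contacts:
  fixes w :: "'a::euclidean_space"
  assumes w: "norm w = 1" and "finite G" and notin: "c *\<^sub>R w \<notin> convex hull G"
  obtains v where "inner w v = 0" "\<And>g. g \<in> G \<Longrightarrow> inner g w = c \<Longrightarrow> inner g v < 0"
proof (cases "G = {}")
  case True
  then show ?thesis
    using that[of 0] by simp
next
  case False
  let ?C = "convex hull G"
  have C: "closed ?C" "?C \<noteq> {}"
    using \<open>finite G\<close> False by (simp_all add: compact_imp_closed finite_imp_compact_convex_hull)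
  define q where "q = closest_point ?C (c *\<^sub>R w)"
  define u where "u = c *\<^sub>R w - q"
  have "q \<in> ?C"
    unfolding q_def using C by (rule closest_point_in_set)
  then have "u \<noteq> 0"
    using notin by (auto simp: u_def)
  define v where "v = u - inner u w *\<^sub>R w"
  have "inner w w = 1"
    using w by (simp add: power2_norm_eq_inner[symmetric])
  then have "inner w v = 0"
    by (simp add: v_def inner_diff_right inner_commute)
  moreover have "inner g v < 0" if "g \<in> G" "inner g w = c" for g
  proof -
    have "inner u (g - q) \<le> 0"
      unfolding u_def q_def using C that(1) by (intro closest_point_dot) (auto intro: hull_inc)
    moreover have "q = c *\<^sub>R w - u"
      by (simp add: u_def)
    ultimately have "inner g v \<le> - inner u u"
      using that(2) by (simp add: v_def inner_diff_left inner_diff_right inner_commute mult.commute)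
    moreover have "0 < inner u u"
      using \<open>u \<noteq> 0\<close> by simp
    ultimately show ?thesis
      by linarith
  qed
  ultimately show ?thesis
    by (rule that)
qed

lemma unit_vector_strictly_below:
  fixes w :: "'a::euclidean_space"
  assumes w: "norm w = 1" and "finite G"
    and below: "\<And>g. g \<in> G \<Longrightarrow> inner g w \<le> c" and "c *\<^sub>R w \<notin> convex hull G"
  obtains w' where "norm w' = 1" "\<And>g. g \<in> G \<Longrightarrow> inner g w' < c"
proof -
  obtain v where v: "inner w v = 0" "\<And>g. g \<in> G \<Longrightarrow> inner g w = c \<Longrightarrow> inner g v < 0"
    using tangent_vector_away_from_contacts[OF assms(1,2,4)] by blast
  show ?thesis
  proof (cases "v = 0")
    case True
    then have "\<And>g. g \<in> G \<Longrightarrow> inner g w < c"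
      using below v(2) by force
    then show ?thesis
      using that w by blast
  next
    case False
    have "inner w (sgn v) = 0" "\<And>g. g \<in> G \<Longrightarrow> inner g w = c \<Longrightarrow> inner g (sgn v) < 0"
      using v False by (simp_all add: sgn_div_norm mult_pos_neg)
    moreover have "norm (sgn v) = 1"
      using False by (simp add: norm_sgn)
    ultimately show ?thesis
      using rotation_strictly_below[OF w _ _ \<open>finite G\<close> below] that by metis
  qed
qed

section \<open>Margins and HardMax loss of a configuration\<close>

abbreviation rest_hull :: "nat \<Rightarrow> (nat \<Rightarrow> real^'d) \<Rightarrow> nat \<Rightarrow> (real^'d) set" where
  "rest_hull K W k \<equiv> convex hull (W ` ({..<K} - {k}))"

lemma OB_norm: "W \<in> OB K \<Longrightarrow> k < K \<Longrightarrow> norm (W k) = 1"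
  by (simp add: OB_def)

lemma OB2_norm: "H \<in> OB2 K n \<Longrightarrow> k < K \<Longrightarrow> i < n \<Longrightarrow> norm (H k i) = 1"
  by (simp add: OB2_def)

lemma rest_hull_closed: "closed (rest_hull K W k)"
  by (intro compact_imp_closed finite_imp_compact_convex_hull) simp

lemma rest_hull_nonempty:
  assumes "2 \<le> K"
  shows "rest_hull K W k \<noteq> {}"
proof -
  have "(if k = 0 then 1 else 0) \<in> {..<K} - {k}"
    using assms by auto
  then show ?thesis
    by auto
qed

lemma ovr_dist_closest_point:
  assumes "2 \<le> K"
  shows "ovr_dist K W k = norm (W k - closest_point (rest_hull K W k) (W k))"
proof -
  have "ovr_dist K W k = infdist (W k) (rest_hull K W k)"
    using rest_hull_nonempty[OF assms]
    by (simp add: ovr_dist_def dist_conv_def infdist_notempty dist_norm)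
  then show ?thesis
    by (simp add: infdist_eq_setdist setdist_closest_point[OF rest_hull_closed rest_hull_nonempty[OF assms]]
        dist_norm)
qed

lemma ovr_dist_le: "2 \<le> K \<Longrightarrow> x \<in> rest_hull K W k \<Longrightarrow> ovr_dist K W k \<le> norm (W k - x)"
  using closest_point_le[OF rest_hull_closed] by (simp add: ovr_dist_closest_point dist_norm)

lemma ovr_dist_ge:
  assumes "2 \<le> K" and "\<And>x. x \<in> rest_hull K W k \<Longrightarrow> b \<le> norm (W k - x)"
  shows "b \<le> ovr_dist K W k"
  using assms(2)[OF closest_point_in_set[OF rest_hull_closed rest_hull_nonempty[OF assms(1)]]]
  by (simp add: ovr_dist_closest_point[OF assms(1)])

lemma rho_ovr_le: "k < K \<Longrightarrow> rho_ovr K W \<le> ovr_dist K W k"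
  unfolding rho_ovr_def by (rule Min_le) auto

lemma rho_ovr_attained:
  assumes "0 < K"
  shows "\<exists>k<K. rho_ovr K W = ovr_dist K W k"
proof -
  have "rho_ovr K W \<in> ovr_dist K W ` {..<K}"
    unfolding rho_ovr_def using assms by (intro Min_in) auto
  then show ?thesis
    by auto
qed

lemma rho_ovr_nonneg: "2 \<le> K \<Longrightarrow> 0 \<le> rho_ovr K W"
  using rho_ovr_attained[of K W] by (auto simp: ovr_dist_closest_point)

lemma ovo_dist_le: "k < K \<Longrightarrow> j < K \<Longrightarrow> j \<noteq> k \<Longrightarrow> ovo_dist K W k \<le> norm (W k - W j)"
  unfolding ovo_dist_def by (rule Min_le) auto

lemma ovo_dist_attained:
  assumes "2 \<le> K"
  shows "\<exists>j<K. j \<noteq> k \<and> ovo_dist K W k = norm (W k - W j)"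
proof -
  have "ovo_dist K W k \<in> (\<lambda>j. norm (W k - W j)) ` ({..<K} - {k})"
    unfolding ovo_dist_def using rest_hull_nonempty[OF assms, of W k] by (intro Min_in) auto
  then show ?thesis
    by auto
qed

lemma ovo_dist_nonneg: "2 \<le> K \<Longrightarrow> 0 \<le> ovo_dist K W k"
  using ovo_dist_attained[of K k W] by auto

lemma rho_ovo_le: "k < K \<Longrightarrow> rho_ovo K W \<le> ovo_dist K W k"
  unfolding rho_ovo_def by (rule Min_le) auto

lemma rho_ovo_le_dist: "k < K \<Longrightarrow> j < K \<Longrightarrow> j \<noteq> k \<Longrightarrow> rho_ovo K W \<le> norm (W k - W j)"
  using rho_ovo_le ovo_dist_le order_trans by blast

lemma rho_ovo_attained: "2 \<le> K \<Longrightarrow> \<exists>k<K. \<exists>j<K. j \<noteq> k \<and> rho_ovo K W = norm (W k - W j)"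
  unfolding rho_ovo_def using Min_in[of "ovo_dist K W ` {..<K}"] ovo_dist_attained[of K _ W]
  by fastforce

lemma rho_ovo_ge:
  assumes "2 \<le> K" and "\<And>k j. k < K \<Longrightarrow> j < K \<Longrightarrow> j \<noteq> k \<Longrightarrow> t \<le> norm (W k - W j)"
  shows "t \<le> rho_ovo K W"
  using rho_ovo_attained[OF assms(1), of W] assms(2) by auto

lemma rho_ovo_nonneg: "2 \<le> K \<Longrightarrow> 0 \<le> rho_ovo K W"
  by (rule rho_ovo_ge) auto

lemma finite_L_HardMax_terms:
  fixes K n :: nat
  shows "finite {inner (W j - W k) (H k i) | k i j. k < K \<and> i < n \<and> j < K \<and> j \<noteq> k}"
  by (rule finite_subset[of _ "(\<lambda>(k, i, j). inner (W j - W k) (H k i)) ` ({..<K} \<times> {..<n} \<times> {..<K})"])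
    (force, simp)

lemma L_HardMax_ge:
  assumes "k < K" "i < n" "j < K" "j \<noteq> k"
  shows "inner (W j - W k) (H k i) \<le> L_HardMax K n W H"
  unfolding L_HardMax_def using assms by (intro Max_ge[OF finite_L_HardMax_terms]) blast

lemma L_HardMax_le:
  assumes "2 \<le> K" "1 \<le> n"
    and "\<And>k i j. k < K \<Longrightarrow> i < n \<Longrightarrow> j < K \<Longrightarrow> j \<noteq> k \<Longrightarrow> inner (W j - W k) (H k i) \<le> M"
  shows "L_HardMax K n W H \<le> M"
proof -
  have "inner (W 1 - W 0) (H 0 0) \<in> {inner (W j - W k) (H k i) | k i j. k < K \<and> i < n \<and> j < K \<and> j \<noteq> k}"
    using assms(1,2) by force
  then show ?thesis
    unfolding L_HardMax_def using assms(3) by (intro Max.boundedI[OF finite_L_HardMax_terms]) blast+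
qed

lemma inner_rest_hull_le_L_HardMax:
  assumes "k < K" "i < n" "x \<in> rest_hull K W k"
  shows "inner (x - W k) (H k i) \<le> L_HardMax K n W H"
proof -
  have "inner x (H k i) \<le> L_HardMax K n W H + inner (W k) (H k i)"
  proof (rule inner_le_on_convex_hull[OF _ assms(3)])
    fix g assume "g \<in> W ` ({..<K} - {k})"
    then obtain j where "j < K" "j \<noteq> k" "g = W j"
      by blast
    then show "inner g (H k i) \<le> L_HardMax K n W H + inner (W k) (H k i)"
      using L_HardMax_ge[OF assms(1,2), of j W H] by (simp add: inner_diff_left)
  qed
  then show ?thesis
    by (simp add: inner_diff_left)
qed

lemma neg_rho_ovr_le_L_HardMax:
  assumes "2 \<le> K" "1 \<le> n" "H \<in> OB2 K n"
  shows "- rho_ovr K W \<le> L_HardMax K n W H"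
proof -
  obtain k where k: "k < K" "rho_ovr K W = ovr_dist K W k"
    using rho_ovr_attained[of K W] assms(1) by auto
  define p where "p = closest_point (rest_hull K W k) (W k)"
  have "p \<in> rest_hull K W k"
    unfolding p_def using rest_hull_closed rest_hull_nonempty[OF assms(1)] by (rule closest_point_in_set)
  then have "inner (p - W k) (H k 0) \<le> L_HardMax K n W H"
    using k(1) assms(2) by (intro inner_rest_hull_le_L_HardMax) auto
  moreover have "inner (W k - p) (H k 0) \<le> norm (W k - p)"
    using norm_cauchy_schwarz[of "W k - p" "H k 0"] OB2_norm[OF assms(3) k(1)] assms(2) by simp
  moreover have "inner (p - W k) (H k 0) = - inner (W k - p) (H k 0)"
    by (simp add: inner_diff_left)
  ultimately show ?thesis
    using k(2) by (simp add: ovr_dist_closest_point[OF assms(1)] p_def)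
qed

definition proj_features :: "nat \<Rightarrow> nat \<Rightarrow> (nat \<Rightarrow> real^'d) \<Rightarrow> nat \<Rightarrow> nat \<Rightarrow> real^'d" where
  "proj_features K n W =
     (\<lambda>k i. if k < K \<and> i < n then sgn (W k - closest_point (rest_hull K W k) (W k)) else 0)"

lemma proj_features_OB2:
  assumes "2 \<le> K" and "\<And>k. k < K \<Longrightarrow> 0 < ovr_dist K W k"
  shows "proj_features K n W \<in> OB2 K n"
  using assms by (auto simp: OB2_def proj_features_def norm_sgn ovr_dist_closest_point)

lemma L_HardMax_proj_features:
  assumes "2 \<le> K" "1 \<le> n"
  shows "L_HardMax K n W (proj_features K n W) \<le> - rho_ovr K W"
proof (rule L_HardMax_le[OF assms])
  fix k i j assume kij: "k < K" "i < n" "j < K" "j \<noteq> k"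
  define p where "p = closest_point (rest_hull K W k) (W k)"
  define u where "u = W k - p"
  have "inner u (W j - p) \<le> 0"
    unfolding u_def p_def using kij(3,4) by (intro closest_point_dot rest_hull_closed) (auto intro: hull_inc)
  moreover have "W j - p = (W j - W k) + u"
    by (simp add: u_def)
  ultimately have "inner (W j - W k) u \<le> - (norm u)\<^sup>2"
    by (simp add: inner_add_right inner_commute power2_norm_eq_inner)
  then have "inner (W j - W k) (sgn u) \<le> - norm u"
  proof (cases "u = 0")
    case False
    then have "inner (W j - W k) u / norm u \<le> - norm u"
      using \<open>inner (W j - W k) u \<le> - (norm u)\<^sup>2\<close> by (simp add: pos_divide_le_eq power2_eq_square)
    then show ?thesis
      by (simp add: sgn_div_norm divide_inverse mult.commute)
  qed simp
  also have "- norm u \<le> - rho_ovr K W"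
    using rho_ovr_le[OF kij(1), of W] by (simp add: ovr_dist_closest_point[OF assms(1)] u_def p_def)
  finally show "inner (W j - W k) (proj_features K n W k i) \<le> - rho_ovr K W"
    using kij by (simp add: proj_features_def u_def p_def)
qed

lemma ovo_dist_sq_le_ovr_dist:
  assumes "2 \<le> K" "W \<in> OB K" "k < K"
  shows "(ovo_dist K W k)\<^sup>2 / 2 \<le> ovr_dist K W k"
proof (rule ovr_dist_ge[OF assms(1)])
  fix x assume x: "x \<in> rest_hull K W k"
  let ?d = "ovo_dist K W k"
  have wk: "norm (W k) = 1"
    using assms by (simp add: OB_norm)
  have "inner x (W k) \<le> 1 - ?d\<^sup>2 / 2"
  proof (rule inner_le_on_convex_hull[OF _ x])
    fix g assume "g \<in> W ` ({..<K} - {k})"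
    then obtain j where j: "j < K" "j \<noteq> k" "g = W j"
      by blast
    have "?d\<^sup>2 \<le> (norm (W k - W j))\<^sup>2"
      using ovo_dist_le[OF assms(3) j(1,2)] ovo_dist_nonneg[OF assms(1)] by (rule power_mono)
    then show "inner g (W k) \<le> 1 - ?d\<^sup>2 / 2"
      using norm_diff_unit_sq[OF wk OB_norm[OF assms(2) j(1)]] j(3) by (simp add: inner_commute)
  qed
  moreover have "inner (W k - x) (W k) \<le> norm (W k - x)"
    using norm_cauchy_schwarz[of "W k - x" "W k"] wk by simp
  moreover have "inner (W k) (W k) = 1"
    using wk by (simp add: power2_norm_eq_inner[symmetric])
  ultimately show "?d\<^sup>2 / 2 \<le> norm (W k - x)"
    by (simp add: inner_diff_left)
qed

lemma rho_ovo_sq_le_rho_ovr: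
  assumes "2 \<le> K" "W \<in> OB K"
  shows "(rho_ovo K W)\<^sup>2 \<le> 2 * rho_ovr K W"
proof -
  obtain k where k: "k < K" "rho_ovr K W = ovr_dist K W k"
    using rho_ovr_attained[of K W] assms(1) by auto
  have "(rho_ovo K W)\<^sup>2 \<le> (ovo_dist K W k)\<^sup>2"
    using rho_ovo_le[OF k(1)] rho_ovo_nonneg[OF assms(1)] by (rule power_mono)
  then show ?thesis
    using ovo_dist_sq_le_ovr_dist[OF assms k(1)] k(2) by simp
qed

lemma ovr_dist_le_half_sq_dist_if_collapsed:
  assumes "2 \<le> K" "W \<in> OB K" "k < K" "j < K" "j \<noteq> k"
    and collapsed: "sgn (W k - closest_point (rest_hull K W k) (W k)) = W k"
  shows "2 * ovr_dist K W k \<le> (norm (W k - W j))\<^sup>2"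
proof -
  define p where "p = closest_point (rest_hull K W k) (W k)"
  define r where "r = ovr_dist K W k"
  have wk: "norm (W k) = 1"
    using assms by (simp add: OB_norm)
  have r: "r = norm (W k - p)"
    unfolding r_def p_def by (rule ovr_dist_closest_point[OF assms(1)])
  have "W k - p = r *\<^sub>R sgn (W k - p)"
    by (cases "W k = p") (simp_all add: r sgn_div_norm)
  then have p: "p = (1 - r) *\<^sub>R W k"
    using collapsed by (simp add: p_def algebra_simps)
  have "0 < r"
    using collapsed wk by (auto simp: r p_def)
  have "inner (W k - p) (W j - p) \<le> 0"
    unfolding p_def using assms(4,5) by (intro closest_point_dot rest_hull_closed) (auto intro: hull_inc)
  moreover have "inner (W k) (W k) = 1"
    using wk by (simp add: power2_norm_eq_inner[symmetric])
  ultimately have "r * (inner (W k) (W j) - (1 - r)) \<le> 0"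
    by (simp add: p inner_diff_left inner_diff_right algebra_simps)
  then have "inner (W k) (W j) \<le> 1 - r"
    using \<open>0 < r\<close> by (simp add: mult_le_0_iff)
  then show ?thesis
    using norm_diff_unit_sq[OF wk OB_norm[OF assms(2,4)]] by (simp add: r_def)
qed

lemma rho_ovr_le_half_sq_rho_ovo_if_collapsed:
  assumes "2 \<le> K" "W \<in> OB K"
    and "\<And>k. k < K \<Longrightarrow> sgn (W k - closest_point (rest_hull K W k) (W k)) = W k"
  shows "2 * rho_ovr K W \<le> (rho_ovo K W)\<^sup>2"
proof -
  obtain k j where kj: "k < K" "j < K" "j \<noteq> k" "rho_ovo K W = norm (W k - W j)"
    using rho_ovo_attained[OF assms(1)] by blast
  have "2 * rho_ovr K W \<le> 2 * ovr_dist K W k"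
    using rho_ovr_le[OF kj(1)] by simp
  also have "\<dots> \<le> (rho_ovo K W)\<^sup>2"
    using ovr_dist_le_half_sq_dist_if_collapsed[OF assms(1,2) kj(1-3) assms(3)[OF kj(1)]] kj(4) by simp
  finally show ?thesis .
qed

lemma argmax_on_eq_if_sq_bound:
  fixes f g :: "'a \<Rightarrow> real"
  assumes nonneg: "\<And>x. x \<in> S \<Longrightarrow> 0 \<le> g x"
    and bound: "\<And>x. x \<in> S \<Longrightarrow> (g x)\<^sup>2 \<le> 2 * f x"
    and tight: "\<And>x. x \<in> argmax_on S f \<Longrightarrow> 2 * f x \<le> (g x)\<^sup>2"
    and "x\<^sub>0 \<in> argmax_on S f"
  shows "argmax_on S f = argmax_on S g"
proof (intro equalityI subsetI)
  fix x assume x: "x \<in> argmax_on S f"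
  have "g y \<le> g x" if "y \<in> S" for y
  proof -
    have "(g y)\<^sup>2 \<le> (g x)\<^sup>2"
      using bound[OF that] tight[OF x] x that by (force simp: argmax_on_def)
    then show ?thesis
      using nonneg x by (auto simp: argmax_on_def intro: power2_le_imp_le)
  qed
  then show "x \<in> argmax_on S g"
    using x by (simp add: argmax_on_def)
next
  fix x assume x: "x \<in> argmax_on S g"
  have "f y \<le> f x" if "y \<in> S" for y
  proof -
    have "2 * f y \<le> 2 * f x\<^sub>0"
      using assms(4) that by (simp add: argmax_on_def)
    also have "\<dots> \<le> (g x\<^sub>0)\<^sup>2"
      by (rule tight[OF assms(4)])
    also have "\<dots> \<le> (g x)\<^sup>2"
      using x assms(4) nonneg by (intro power_mono) (auto simp: argmax_on_def)
    also have "\<dots> \<le> 2 * f x"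
      using x bound by (simp add: argmax_on_def)
    finally show ?thesis
      by simp
  qed
  then show "x \<in> argmax_on S f"
    using x by (simp add: argmax_on_def)
qed

section \<open>Existence and positivity of Softmax Codes\<close>

lemma OB_seq_convergent_subseq:
  fixes X :: "nat \<Rightarrow> nat \<Rightarrow> real^'d"
  assumes X: "\<And>m. X m \<in> OB K"
  obtains r W where "strict_mono r" "W \<in> OB K" "\<And>k. k < K \<Longrightarrow> (\<lambda>m. X (r m) k) \<longlonglongrightarrow> W k"
proof -
  have "bounded ((\<lambda>x. x k) ` range X)" if "k \<in> {..<K}" for k
    using that by (intro bounded_subset[OF bounded_cball[of 0 1]]) (auto simp: OB_norm[OF X])
  then obtain l r where r: "strict_mono r"
    and l: "\<forall>e>0. \<forall>\<^sub>F m in sequentially. \<forall>k\<in>{..<K}. dist (X (r m) k) (l k) < e"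
    using compact_lemma_general[where basis = "{..<K}" and f = X and proj = "\<lambda>x k. x k" and unproj = id]
    by auto
  have lim: "(\<lambda>m. X (r m) k) \<longlonglongrightarrow> l k" if "k < K" for k
  proof (rule tendstoI)
    fix e :: real assume "0 < e"
    show "\<forall>\<^sub>F m in sequentially. dist (X (r m) k) (l k) < e"
      by (rule eventually_mono[OF l[rule_format, OF \<open>0 < e\<close>]]) (use that in auto)
  qed
  define W where "W k = (if k < K then l k else 0)" for k
  have "norm (l k) = 1" if "k < K" for k
  proof -
    have "(\<lambda>m. norm (X (r m) k)) \<longlonglongrightarrow> norm (l k)"
      using lim[OF that] by (rule tendsto_norm)
    moreover have "(\<lambda>m. norm (X (r m) k)) = (\<lambda>m. 1)"
      using that by (simp add: OB_norm[OF X])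
    ultimately show ?thesis
      using LIMSEQ_unique[OF _ tendsto_const] by metis
  qed
  then have "W \<in> OB K"
    by (simp add: OB_def W_def)
  then show ?thesis
    using that r lim by (simp add: W_def)
qed

lemma ovr_dist_limit_ge:
  fixes X :: "nat \<Rightarrow> nat \<Rightarrow> real^'d"
  assumes "2 \<le> K" "k < K" and lim: "\<And>j. j < K \<Longrightarrow> (\<lambda>m. X m j) \<longlonglongrightarrow> W j"
    and below: "\<And>m. a m \<le> ovr_dist K (X m) k" and "a \<longlonglongrightarrow> s"
  shows "s \<le> ovr_dist K W k"
proof (rule ovr_dist_ge[OF assms(1)])
  fix x assume x: "x \<in> rest_hull K W k"
  obtain u where u: "\<forall>j\<in>{..<K} - {k}. 0 \<le> u j" "sum u ({..<K} - {k}) = 1"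
    "x = (\<Sum>j\<in>{..<K} - {k}. u j *\<^sub>R W j)"
    using convex_hull_image_weights[OF finite_Diff[OF finite_lessThan] x] by blast
  define q where "q m = (\<Sum>j\<in>{..<K} - {k}. u j *\<^sub>R X m j)" for m
  have "q m \<in> rest_hull K (X m) k" for m
    unfolding q_def using u(1,2) by (intro convex_sum) (auto intro: hull_inc)
  then have "a m \<le> norm (X m k - q m)" for m
    using below ovr_dist_le[OF assms(1)] order_trans by blast
  moreover have "(\<lambda>m. norm (X m k - q m)) \<longlonglongrightarrow> norm (W k - x)"
    unfolding q_def u(3) using assms(2) lim by (intro tendsto_intros) auto
  ultimately show "s \<le> norm (W k - x)"
    using \<open>a \<longlonglongrightarrow> s\<close> by (intro LIMSEQ_le[where X = a]) auto
qed

lemma rho_ovr_le_two: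
  assumes "2 \<le> K" "W \<in> OB K"
  shows "rho_ovr K W \<le> 2"
proof -
  have "rho_ovr K W \<le> ovr_dist K W 0"
    using assms(1) by (intro rho_ovr_le) simp
  also have "\<dots> \<le> norm (W 0 - W 1)"
    using assms(1) by (intro ovr_dist_le hull_inc) auto
  also have "\<dots> \<le> norm (W 0) + norm (W 1)"
    by (rule norm_triangle_ineq4)
  also have "\<dots> = 2"
    using assms by (simp add: OB_norm)
  finally show ?thesis .
qed

lemma softmax_code_exists:
  assumes "2 \<le> K"
  shows "\<exists>W :: nat \<Rightarrow> real^'d. softmax_code K W"
proof -
  let ?R = "rho_ovr K ` (OB K :: (nat \<Rightarrow> real^'d) set)"
  obtain e :: "real^'d" where "norm e = 1"
    using vector_choose_size[of 1] by auto
  then have "(\<lambda>j. if j < K then e else 0) \<in> OB K"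
    by (simp add: OB_def)
  then have "?R \<noteq> {}"
    by blast
  moreover have bdd: "bdd_above ?R"
    using rho_ovr_le_two[OF assms] by (intro bdd_aboveI[of _ 2]) auto
  ultimately have "Sup ?R \<in> closure ?R"
    by (rule closure_contains_Sup)
  then obtain y where y: "\<forall>m. y m \<in> ?R" "y \<longlonglongrightarrow> Sup ?R"
    unfolding closure_sequential by blast
  then have "\<forall>m. \<exists>W :: nat \<Rightarrow> real^'d. W \<in> OB K \<and> y m = rho_ovr K W"
    by blast
  then obtain X :: "nat \<Rightarrow> nat \<Rightarrow> real^'d" where X: "\<And>m. X m \<in> OB K" "\<And>m. y m = rho_ovr K (X m)"
    using choice[of "\<lambda>m W. W \<in> OB K \<and> y m = rho_ovr K W"] by blast
  obtain r W where r: "strict_mono r" "W \<in> OB K" "\<And>k. k < K \<Longrightarrow> (\<lambda>m. X (r m) k) \<longlonglongrightarrow> W k"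
    using OB_seq_convergent_subseq[of X, OF X(1)] by blast
  have "Sup ?R \<le> ovr_dist K W k" if "k < K" for k
  proof (rule ovr_dist_limit_ge[where X = "\<lambda>m. X (r m)" and a = "y \<circ> r", OF assms that r(3)])
    show "(y \<circ> r) m \<le> ovr_dist K (X (r m)) k" for m
      using X(2) rho_ovr_le[OF that] by simp
    show "(y \<circ> r) \<longlonglongrightarrow> Sup ?R"
      using y(2) r(1) by (rule LIMSEQ_subseq_LIMSEQ)
  qed
  moreover obtain k where "k < K" "rho_ovr K W = ovr_dist K W k"
    using rho_ovr_attained[of K W] assms by auto
  ultimately have "Sup ?R \<le> rho_ovr K W"
    by simp
  moreover have "rho_ovr K V \<le> Sup ?R" if "V \<in> OB K" for V :: "nat \<Rightarrow> real^'d"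
    using bdd that by (intro cSup_upper) auto
  ultimately have "softmax_code K W"
    using r(2) by (force simp: softmax_code_def argmax_on_def)
  then show ?thesis
    by blast
qed

lemma softmax_code_rho_ovr_pos:
  assumes "2 \<le> K"
    and rattler_free: "\<forall>W :: nat \<Rightarrow> real^'d. softmax_code K W \<longrightarrow> (\<forall>k. \<not> ovr_rattler K W k)"
    and S: "softmax_code K (W :: nat \<Rightarrow> real^'d)"
  shows "0 < rho_ovr K W"
proof (rule ccontr)
  (* Were the optimal margin 0, every configuration would be a Softmax Code, among them one
     with a single column antipodal to all the others, which is a rattler. *)
  assume "\<not> 0 < rho_ovr K W"
  obtain e :: "real^'d" where e: "norm e = 1"
    using vector_choose_size[of 1] by auto
  define V where "V j = (if j < K - 1 then e else if j = K - 1 then - e else 0)" for j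
  have V: "V \<in> OB K"
    using e assms(1) by (auto simp: OB_def V_def)
  then have "rho_ovr K V \<le> rho_ovr K W"
    using S by (simp add: softmax_code_def argmax_on_def)
  then have V0: "rho_ovr K V = 0"
    using \<open>\<not> 0 < rho_ovr K W\<close> rho_ovr_nonneg[OF assms(1), of V] by simp
  have "softmax_code K V"
    using S V V0 \<open>\<not> 0 < rho_ovr K W\<close> by (force simp: softmax_code_def argmax_on_def)
  moreover have "ovr_dist K V (K - 1) \<noteq> rho_ovr K V"
  proof -
    have "{..<K} - {K - 1} = {..<K - 1}"
      using assms(1) by auto
    moreover have "V ` {..<K - 1} = (\<lambda>_. e) ` {..<K - 1}"
      by (rule image_cong) (simp_all add: V_def)
    ultimately have "V ` ({..<K} - {K - 1}) = {e}"
      using assms(1) by (simp add: image_constant_conv lessThan_empty_iff)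
    then have "closest_point (rest_hull K V (K - 1)) (V (K - 1)) = e"
      using closest_point_in_set[of "{e}"] by simp
    moreover have "- e - e = (- 2) *\<^sub>R e"
      by (simp add: algebra_simps scaleR_2)
    ultimately show ?thesis
      using assms(1) e V0 by (simp add: ovr_dist_closest_point V_def)
  qed
  ultimately have "softmax_code K V" "ovr_rattler K V (K - 1)"
    using assms(1) by (simp_all add: ovr_rattler_def)
  then show False
    using rattler_free by blast
qed

section \<open>Tammes solutions and optimal pairs\<close>

lemma tammes_solution_scaled_column_in_rest_hull:
  assumes "2 \<le> K"
    and rattler_free: "\<forall>W :: nat \<Rightarrow> real^'d. tammes_solution K W \<longrightarrow> (\<forall>k. \<not> ovo_rattler K W k)"
    and T: "tammes_solution K (W :: nat \<Rightarrow> real^'d)" and k: "k < K"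
  shows "(1 - (ovo_dist K W k)\<^sup>2 / 2) *\<^sub>R W k \<in> rest_hull K W k"
proof (rule ccontr)
  define d where "d = ovo_dist K W k"
  define c where "c = 1 - d\<^sup>2 / 2"
  assume "\<not> ?thesis"
  then have notin: "c *\<^sub>R W k \<notin> convex hull (W ` ({..<K} - {k}))"
    by (simp add: c_def d_def)
  have W: "W \<in> OB K"
    using T by (simp add: tammes_solution_def argmax_on_def)
  have d: "d = rho_ovo K W"
    using rattler_free T k by (auto simp: ovo_rattler_def d_def)
  have "inner g (W k) \<le> c" if "g \<in> W ` ({..<K} - {k})" for g
  proof -
    obtain j where j: "j < K" "j \<noteq> k" "g = W j"
      using \<open>g \<in> W ` ({..<K} - {k})\<close> by auto
    have "d\<^sup>2 \<le> (norm (W k - W j))\<^sup>2"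
      unfolding d_def using ovo_dist_le[OF k j(1,2)] ovo_dist_nonneg[OF assms(1)] by (rule power_mono)
    then show ?thesis
      using norm_diff_unit_sq[OF OB_norm[OF W k] OB_norm[OF W j(1)]] j(3) by (simp add: c_def inner_commute)
  qed
  then obtain w' where w': "norm w' = 1" "\<And>g. g \<in> W ` ({..<K} - {k}) \<Longrightarrow> inner g w' < c"
    using unit_vector_strictly_below[OF OB_norm[OF W k] _ _ notin] by blast
  define W' where "W' = W(k := w')"
  have W': "W' \<in> OB K"
    using W w'(1) k by (auto simp: OB_def W'_def)
  have far: "d < norm (w' - W j)" if "j < K" "j \<noteq> k" for j
  proof -
    have "d\<^sup>2 < (norm (w' - W j))\<^sup>2"
      using w'(2)[of "W j"] that norm_diff_unit_sq[OF w'(1) OB_norm[OF W that(1)]]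
      by (simp add: c_def inner_commute)
    then show ?thesis
      by (rule power_less_imp_less_base) simp
  qed
  have "d \<le> rho_ovo K W'"
  proof (rule rho_ovo_ge[OF assms(1)])
    fix a b assume ab: "a < K" "b < K" "b \<noteq> a"
    consider "a = k" | "b = k" | "a \<noteq> k" "b \<noteq> k"
      by blast
    then show "d \<le> norm (W' a - W' b)"
    proof cases
      case 1
      then show ?thesis
        using far[of b] ab by (simp add: W'_def)
    next
      case 2
      then show ?thesis
        using far[of a] ab by (simp add: W'_def norm_minus_commute)
    next
      case 3
      then show ?thesis
        using rho_ovo_le_dist[OF ab] d by (simp add: W'_def)
    qed
  qed
  moreover have "rho_ovo K W' \<le> d"
    using T W' d by (simp add: tammes_solution_def argmax_on_def)
  ultimately have "tammes_solution K W'" "rho_ovo K W' = d"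
    using T W' d by (auto simp: tammes_solution_def argmax_on_def)
  moreover have "d < ovo_dist K W' k"
    using ovo_dist_attained[OF assms(1), of k W'] far by (auto simp: W'_def)
  ultimately show False
    using rattler_free k by (auto simp: ovo_rattler_def)
qed

abbreviation hardmax_minimizer :: "nat \<Rightarrow> nat \<Rightarrow> (nat \<Rightarrow> real^'d) \<Rightarrow> (nat \<Rightarrow> nat \<Rightarrow> real^'d) \<Rightarrow> bool" where
  "hardmax_minimizer K n W H \<equiv> W \<in> OB K \<and> H \<in> OB2 K n \<and>
     (\<forall>W' \<in> (OB K :: (nat \<Rightarrow> real^'d) set). \<forall>H' \<in> (OB2 K n :: (nat \<Rightarrow> nat \<Rightarrow> real^'d) set).
        L_HardMax K n W H \<le> L_HardMax K n W' H')"

lemma softmax_code_proj_features_minimizer: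
  assumes "2 \<le> K" "1 \<le> n"
    and rattler_free: "\<forall>W :: nat \<Rightarrow> real^'d. softmax_code K W \<longrightarrow> (\<forall>k. \<not> ovr_rattler K W k)"
    and S: "softmax_code K (W :: nat \<Rightarrow> real^'d)"
  shows "hardmax_minimizer K n W (proj_features K n W)"
proof -
  have "0 < rho_ovr K W"
    using softmax_code_rho_ovr_pos[OF assms(1) rattler_free S] .
  then have "0 < ovr_dist K W k" if "k < K" for k
    using rho_ovr_le[OF that, of W] by linarith
  then have "proj_features K n W \<in> OB2 K n"
    by (rule proj_features_OB2[OF assms(1)])
  moreover have "L_HardMax K n W (proj_features K n W) \<le> L_HardMax K n W' H'"
    if "W' \<in> OB K" "H' \<in> OB2 K n" for W' :: "nat \<Rightarrow> real^'d" and H'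
  proof -
    have "L_HardMax K n W (proj_features K n W) \<le> - rho_ovr K W"
      by (rule L_HardMax_proj_features[OF assms(1,2)])
    also have "\<dots> \<le> - rho_ovr K W'"
      using S that(1) by (auto simp: softmax_code_def argmax_on_def)
    also have "\<dots> \<le> L_HardMax K n W' H'"
      by (rule neg_rho_ovr_le_L_HardMax[OF assms(1,2) that(2)])
    finally show ?thesis .
  qed
  ultimately show ?thesis
    using S by (simp add: softmax_code_def argmax_on_def)
qed

lemma hardmax_minimizer_softmax_code:
  assumes "2 \<le> K" "1 \<le> n"
    and rattler_free: "\<forall>W :: nat \<Rightarrow> real^'d. softmax_code K W \<longrightarrow> (\<forall>k. \<not> ovr_rattler K W k)"
    and min: "hardmax_minimizer K n (W :: nat \<Rightarrow> real^'d) H"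
  shows "softmax_code K W" "L_HardMax K n W H \<le> - rho_ovr K W"
proof -
  obtain W\<^sub>0 :: "nat \<Rightarrow> real^'d" where S\<^sub>0: "softmax_code K W\<^sub>0"
    using softmax_code_exists[OF assms(1)] by blast
  have "W\<^sub>0 \<in> OB K" "proj_features K n W\<^sub>0 \<in> OB2 K n"
    using softmax_code_proj_features_minimizer[OF assms(1-3) S\<^sub>0] by simp_all
  then have "L_HardMax K n W H \<le> L_HardMax K n W\<^sub>0 (proj_features K n W\<^sub>0)"
    using min by blast
  also have "\<dots> \<le> - rho_ovr K W\<^sub>0"
    by (rule L_HardMax_proj_features[OF assms(1,2)])
  finally have "L_HardMax K n W H \<le> - rho_ovr K W\<^sub>0" .
  moreover have "- rho_ovr K W \<le> L_HardMax K n W H"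
    using min by (intro neg_rho_ovr_le_L_HardMax[OF assms(1,2)]) simp
  moreover have "rho_ovr K W \<le> rho_ovr K W\<^sub>0"
    using S\<^sub>0 min by (simp add: softmax_code_def argmax_on_def)
  ultimately have "rho_ovr K W = rho_ovr K W\<^sub>0"
    by linarith
  then show "softmax_code K W"
    using S\<^sub>0 min by (simp add: softmax_code_def argmax_on_def)
  show "L_HardMax K n W H \<le> - rho_ovr K W"
    using \<open>L_HardMax K n W H \<le> - rho_ovr K W\<^sub>0\<close> \<open>rho_ovr K W = rho_ovr K W\<^sub>0\<close> by simp
qed

lemma optimal_features_collapse:
  assumes "2 \<le> K"
    and ovr_rattler_free: "\<forall>W :: nat \<Rightarrow> real^'d. softmax_code K W \<longrightarrow> (\<forall>k. \<not> ovr_rattler K W k)"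
    and ovo_rattler_free: "\<forall>W :: nat \<Rightarrow> real^'d. tammes_solution K W \<longrightarrow> (\<forall>k. \<not> ovo_rattler K W k)"
    and S: "softmax_code K (W :: nat \<Rightarrow> real^'d)" and T: "tammes_solution K W"
    and H: "H \<in> OB2 K n" and L: "L_HardMax K n W H \<le> - rho_ovr K W"
    and "k < K" "i < n"
  shows "H k i = W k"
proof -
  define r where "r = rho_ovr K W"
  define c where "c = 1 - (ovo_dist K W k)\<^sup>2 / 2"
  have W: "W \<in> OB K"
    using S by (simp add: softmax_code_def argmax_on_def)
  have "0 < r"
    unfolding r_def by (rule softmax_code_rho_ovr_pos[OF assms(1) ovr_rattler_free S])
  have "c *\<^sub>R W k \<in> rest_hull K W k"
    unfolding c_def by (rule tammes_solution_scaled_column_in_rest_hull[OF assms(1) ovo_rattler_free T \<open>k < K\<close>])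
  then have "inner (c *\<^sub>R W k - W k) (H k i) \<le> L_HardMax K n W H"
    by (rule inner_rest_hull_le_L_HardMax[OF \<open>k < K\<close> \<open>i < n\<close>])
  then have "inner (c *\<^sub>R W k - W k) (H k i) \<le> - r"
    using L by (simp add: r_def)
  then have *: "r \<le> (1 - c) * inner (W k) (H k i)"
    by (simp add: inner_diff_left algebra_simps)
  have "ovr_dist K W k = r"
    using ovr_rattler_free S \<open>k < K\<close> unfolding ovr_rattler_def r_def by blast
  then have "1 - c \<le> r"
    using ovo_dist_sq_le_ovr_dist[OF assms(1) W \<open>k < K\<close>] by (simp add: c_def)
  moreover have "0 < 1 - c"
  proof -
    have "1 - c \<noteq> 0"
      using * \<open>0 < r\<close> by auto
    moreover have "0 \<le> 1 - c"
      by (simp add: c_def)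
    ultimately show ?thesis
      by linarith
  qed
  ultimately have "1 - c \<le> (1 - c) * inner (W k) (H k i)"
    using * by linarith
  then have "1 \<le> inner (W k) (H k i)"
    using \<open>0 < 1 - c\<close> by (simp add: mult_le_cancel_left1)
  then show ?thesis
    using unit_eq_if_inner_ge_one[OF OB_norm[OF W \<open>k < K\<close>] OB2_norm[OF H \<open>k < K\<close> \<open>i < n\<close>]] by simp
qed

theorem mainTheorem8:
  fixes K n :: nat
  assumes "K \<ge> 2" and "n \<ge> 1"
    and "\<forall>W :: nat \<Rightarrow> real^'d. softmax_code K W \<longrightarrow> (\<forall>k. \<not> ovr_rattler K W k)"
    and "\<forall>W :: nat \<Rightarrow> real^'d. tammes_solution K W \<longrightarrow> (\<forall>k. \<not> ovo_rattler K W k)"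
  shows "(\<forall>(W :: nat \<Rightarrow> real^'d) H.
            W \<in> OB K \<and> H \<in> OB2 K n \<and>
            (\<forall>W' \<in> (OB K :: (nat \<Rightarrow> real^'d) set). \<forall>H' \<in> (OB2 K n :: (nat \<Rightarrow> nat \<Rightarrow> real^'d) set). L_HardMax K n W H \<le> L_HardMax K n W' H')
            \<longrightarrow> (\<forall>k<K. \<forall>i<n. H k i = W k))
       \<longleftrightarrow> argmax_on (OB K :: (nat \<Rightarrow> real^'d) set) (rho_ovr K) =
           argmax_on (OB K) (rho_ovo K)"
proof
  assume collapse: "\<forall>(W :: nat \<Rightarrow> real^'d) H. hardmax_minimizer K n W H \<longrightarrow> (\<forall>k<K. \<forall>i<n. H k i = W k)"
  have "2 * rho_ovr K W \<le> (rho_ovo K W)\<^sup>2" if "W \<in> argmax_on (OB K) (rho_ovr K)" for W :: "nat \<Rightarrow> real^'d"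
  proof (rule rho_ovr_le_half_sq_rho_ovo_if_collapsed[OF assms(1)])
    show "W \<in> OB K"
      using that by (simp add: argmax_on_def)
    have "hardmax_minimizer K n W (proj_features K n W)"
      using that by (intro softmax_code_proj_features_minimizer[OF assms(1-3)]) (simp add: softmax_code_def)
    then show "sgn (W k - closest_point (rest_hull K W k) (W k)) = W k" if "k < K" for k
      using collapse that assms(2) by (fastforce simp: proj_features_def)
  qed
  moreover obtain W\<^sub>0 :: "nat \<Rightarrow> real^'d" where "softmax_code K W\<^sub>0"
    using softmax_code_exists[OF assms(1)] by blast
  ultimately show "argmax_on (OB K :: (nat \<Rightarrow> real^'d) set) (rho_ovr K) = argmax_on (OB K) (rho_ovo K)"
    using rho_ovo_nonneg[OF assms(1)] rho_ovo_sq_le_rho_ovr[OF assms(1)]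
    by (intro argmax_on_eq_if_sq_bound[where x\<^sub>0 = W\<^sub>0]) (simp_all add: softmax_code_def)
next
  assume argmax_eq: "argmax_on (OB K :: (nat \<Rightarrow> real^'d) set) (rho_ovr K) = argmax_on (OB K) (rho_ovo K)"
  show "\<forall>(W :: nat \<Rightarrow> real^'d) H. hardmax_minimizer K n W H \<longrightarrow> (\<forall>k<K. \<forall>i<n. H k i = W k)"
  proof (intro allI impI)
    fix W :: "nat \<Rightarrow> real^'d" and H k i
    assume min: "hardmax_minimizer K n W H" and "k < K" "i < n"
    have "softmax_code K W" "L_HardMax K n W H \<le> - rho_ovr K W"
      using hardmax_minimizer_softmax_code[OF assms(1-3) min] by simp_all
    moreover from this(1) have "tammes_solution K W"
      using argmax_eq by (simp add: softmax_code_def tammes_solution_def)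
    ultimately show "H k i = W k"
      using optimal_features_collapse[OF assms(1,3,4)] min \<open>k < K\<close> \<open>i < n\<close> by blast
  qed
qed

end
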